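(* Let $0<\delta<\frac12$, $n\ge1$, let $\mathbf{y}=(y_1,\dots,y_{n-1})\in D_n$ and $\varphi=(\varphi_1,\dots,\varphi_n)\in E_\delta^n$. Then there is a unique $\mathbf{x}=(x_1,\dots,x_{n-1})\in D_n$ for which there exists a function $\bar\varphi\in E_\delta$ whose restriction to $[x_{i-1},x_i]$ equals $(\varphi_i;[x_{i-1},x_i],[y_{i-1},y_i])$ for each $i$ with $1\le i\le n$ (with the conventions $x_0=y_0=0$, $x_n=y_n=1$).
   Context: $I=[0,1]$. $E_\delta=\mathrm{Diff}_+^{1,\delta}(I)$ is the set of $C^1$ diffeomorphisms $f$ of $I$ fixing $0$ and $1$ whose derivative $f'$ is Hölder continuous of exponent $\delta$; $E_\delta^n$ is its $n$-fold Cartesian product. $D_n=\{(x_1,\dots,x_{n-1}):0<x_1<\cdots<x_{n-1}<1\}$. For $\varphi\in E_\delta$ and closed intervals $J,K\subset\mathbb{R}$ with nonempty interior, where $J$ has left endpoint $x$ and length $j$ and $K$ has left endpoint $y$ and length $k$, the affine distortion $(\varphi;J,K):J\to K$ is $t\mapsto y+k\,\varphi\!\left(\frac{t-x}{j}\right)$. *)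

theory Defs
  imports "HOL-Analysis.Analysis"
begin

text \<open>E_delta = Diff_+^{1,delta}(I): orientation preserving C^1 diffeomorphisms of I=[0,1]
  (fixing 0 and 1) whose derivative is delta-Hoelder continuous on I. Only the values on I matter.\<close>
definition E :: "real \<Rightarrow> (real \<Rightarrow> real) set" where
  "E \<delta> = {f. f 0 = 0 \<and> f 1 = 1 \<and> bij_betw f {0..1} {0..1} \<and>
     (\<exists>f'. (\<forall>x\<in>{0..1}. (f has_real_derivative f' x) (at x within {0..1})) \<and>
           (\<forall>x\<in>{0..1}. f' x > 0) \<and>
           (\<exists>C. \<forall>x\<in>{0..1}. \<forall>y\<in>{0..1}. \<bar>f' x - f' y\<bar> \<le> C * \<bar>x - y\<bar> powr \<delta>))}"

definition D :: "nat \<Rightarrow> real list set" where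
  "D n = {xs. length xs = n - 1 \<and> sorted_wrt (<) xs \<and> (\<forall>x\<in>set xs. 0 < x \<and> x < 1)}"

text \<open>Padding with the conventions x_0 = 0, x_n = 1: (pad xs) ! i = x_i.\<close>
definition pad :: "real list \<Rightarrow> real list" where
  "pad xs = 0 # xs @ [1]"

text \<open>Affine distortion (phi; J, K) with J = [a,b], K = [c,d].\<close>
definition affdist :: "(real \<Rightarrow> real) \<Rightarrow> real \<Rightarrow> real \<Rightarrow> real \<Rightarrow> real \<Rightarrow> real \<Rightarrow> real" where
  "affdist \<phi> a b c d t = c + (d - c) * \<phi> ((t - a) / (b - a))"

end

theory Submission
  imports Defs
begin

text \<open>Let \<open>a_k\<close> and \<open>b_k\<close> be the lengths of the \<open>k\<close>-th pieces of \<open>x\<close> and \<open>y\<close>. The glued map is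
  an affine distortion on every piece, so at the node \<open>x_k\<close> its one-sided derivatives are
  \<open>(b_k / a_k) \<phi>_k'(1)\<close> and \<open>(b_(k+1) / a_(k+1)) \<phi>_(k+1)'(0)\<close>. Affine rescaling only changes Hoelder
  constants, so the glued map lies in \<open>E_\<delta>\<close> exactly when these agree at every node, i.e.
  \<open>a_(k+1) = a_k R_k\<close> for positive ratios \<open>R_k\<close> determined by \<open>y\<close> and \<open>\<phi>\<close>. Hence the lengths are
  fixed up to a common factor, and \<open>a_1 + ... + a_n = 1\<close> fixes that factor.\<close>

definition partition01 :: "nat \<Rightarrow> (nat \<Rightarrow> real) \<Rightarrow> bool" where
  "partition01 n X \<longleftrightarrow> (\<forall>i<n. X i < X (Suc i)) \<and> X 0 = 0 \<and> X n = 1"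

definition holder_on :: "real \<Rightarrow> real set \<Rightarrow> (real \<Rightarrow> real) \<Rightarrow> bool" where
  "holder_on \<delta> S f \<longleftrightarrow> (\<exists>C. \<forall>x\<in>S. \<forall>y\<in>S. \<bar>f x - f y\<bar> \<le> C * \<bar>x - y\<bar> powr \<delta>)"

section \<open>Partitions of the unit interval\<close>

lemma partition01_ge1: "partition01 n X \<Longrightarrow> n \<ge> 1"
  unfolding partition01_def by (cases n) auto

lemma partition01_less:
  assumes "partition01 n X" "i < j" "j \<le> n"
  shows "X i < X j"
  using assms(2,3)
proof (induction j)
  case (Suc j)
  then have "X j < X (Suc j)" using assms(1) unfolding partition01_def by auto
  with Suc show ?case by (cases "i = j") auto
qed simp

lemma partition01_le:
  assumes "partition01 n X" "i \<le> j" "j \<le> n"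
  shows "X i \<le> X j"
  using partition01_less[OF assms(1)] assms(2,3) by (cases "i = j") (auto intro: less_imp_le)

lemma partition01_piece_less: "partition01 n X \<Longrightarrow> i \<in> {1..n} \<Longrightarrow> X (i - 1) < X i"
  using partition01_less[of n X "i - 1" i] by auto

lemma partition01_piece_subset:
  assumes "partition01 n X" "i \<in> {1..n}"
  shows "{X (i - 1)..X i} \<subseteq> {0..1}"
  using partition01_le[OF assms(1), of 0 "i - 1"] partition01_le[OF assms(1), of i n] assms
  unfolding partition01_def by auto

definition piece :: "(nat \<Rightarrow> real) \<Rightarrow> real \<Rightarrow> nat" where
  "piece X t = (LEAST i. 1 \<le> i \<and> t \<le> X i)"

lemma piece_bounds:
  assumes X: "partition01 n X" and t: "t \<in> {0..1}"
  shows "piece X t \<in> {1..n}" "t \<in> {X (piece X t - 1)..X (piece X t)}"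
proof -
  have ex: "1 \<le> n \<and> t \<le> X n" using X t partition01_ge1[OF X] unfolding partition01_def by auto
  have upper: "1 \<le> piece X t" "t \<le> X (piece X t)"
    using LeastI[of "\<lambda>i. 1 \<le> i \<and> t \<le> X i", OF ex] unfolding piece_def by auto
  show "piece X t \<in> {1..n}"
    using upper Least_le[of "\<lambda>i. 1 \<le> i \<and> t \<le> X i", OF ex] unfolding piece_def by auto
  have "X (piece X t - 1) \<le> t"
  proof (cases "piece X t = 1")
    case True then show ?thesis using X t unfolding partition01_def by simp
  next
    case False
    then have "piece X t - 1 < piece X t" using upper(1) by simp
    then have "\<not> (1 \<le> piece X t - 1 \<and> t \<le> X (piece X t - 1))"
      unfolding piece_def by (rule not_less_Least)
    then show ?thesis using False upper(1) by auto
  qed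
  then show "t \<in> {X (piece X t - 1)..X (piece X t)}" using upper by simp
qed

lemma partition01_UN_pieces:
  assumes "partition01 n X"
  shows "(\<Union>i\<in>{1..n}. {X (i - 1)..X i}) = {0..1}"
  using partition01_piece_subset[OF assms] piece_bounds[OF assms] by blast

lemma piece_cases:
  assumes X: "partition01 n X" and i: "i \<in> {1..n}" and t: "t \<in> {X (i - 1)..X i}"
  shows "piece X t = i \<or> (piece X t = i - 1 \<and> 2 \<le> i \<and> t = X (i - 1))"
proof -
  have t01: "t \<in> {0..1}" using partition01_piece_subset[OF X i] t by blast
  note P = piece_bounds[OF X t01]
  have "piece X t \<le> i" unfolding piece_def using i t by (intro Least_le) auto
  moreover have "\<not> piece X t < i - 1"
  proof
    assume "piece X t < i - 1"
    then have "X (piece X t) < X (i - 1)" using partition01_less[OF X] i by auto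
    then show False using P(2) t by auto
  qed
  ultimately consider "piece X t = i" | "piece X t = i - 1" "piece X t \<noteq> i" by linarith
  then show ?thesis using P t by cases auto
qed

definition glue :: "(nat \<Rightarrow> real) \<Rightarrow> (nat \<Rightarrow> real \<Rightarrow> 'a) \<Rightarrow> real \<Rightarrow> 'a" where
  "glue X g t = g (piece X t) t"

lemma glue_eq:
  assumes X: "partition01 n X" and nodes: "\<forall>k\<in>{1..<n}. g k (X k) = g (Suc k) (X k)"
    and i: "i \<in> {1..n}" and t: "t \<in> {X (i - 1)..X i}"
  shows "glue X g t = g i t"
proof -
  consider "piece X t = i" | "piece X t = i - 1" "2 \<le> i" "t = X (i - 1)"
    using piece_cases[OF X i t] by blast
  then show ?thesis
  proof cases
    case 2
    then have "i - 1 \<in> {1..<n}" "Suc (i - 1) = i" using i by auto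
    then show ?thesis using nodes 2 unfolding glue_def by metis
  qed (simp add: glue_def)
qed

lemma sum_increments:
  fixes X :: "nat \<Rightarrow> real"
  shows "(\<Sum>k\<in>{1..m}. X k - X (k - 1)) = X m - X 0"
  by (induction m) (auto simp: atLeastAtMostSuc_conv)

lemma has_field_derivative_within_UN:
  fixes f :: "real \<Rightarrow> real"
  assumes "finite I" "\<forall>i\<in>I. (f has_real_derivative L) (at x within S i)"
  shows "(f has_real_derivative L) (at x within (\<Union>i\<in>I. S i))"
  using assms
  by (induction I rule: finite_induct) (simp_all add: has_field_derivative_iff Lim_within_Un)

lemma has_field_derivative_within_partition01:
  fixes f :: "real \<Rightarrow> real"
  assumes X: "partition01 n X"
    and der: "\<And>i. i \<in> {1..n} \<Longrightarrow> x \<in> {X (i - 1)..X i} \<Longrightarrow>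
      (f has_real_derivative L) (at x within {X (i - 1)..X i})"
  shows "(f has_real_derivative L) (at x within {0..1})"
proof -
  have "(f has_real_derivative L) (at x within {X (i - 1)..X i})" if i: "i \<in> {1..n}" for i
  proof (cases "x \<in> {X (i - 1)..X i}")
    case False
    then have "at x within {X (i - 1)..X i} = bot"
      using closed_limpt trivial_limit_within by blast
    then show ?thesis by simp
  qed (use der i in auto)
  then have "(f has_real_derivative L) (at x within (\<Union>i\<in>{1..n}. {X (i - 1)..X i}))"
    by (intro has_field_derivative_within_UN) auto
  then show ?thesis unfolding partition01_UN_pieces[OF X] .
qed

lemma has_field_derivative_unique_Icc:
  fixes f :: "real \<Rightarrow> real"
  assumes "a < b" "x \<in> {a..b}" "(f has_real_derivative L1) (at x within {a..b})"
    "(f has_real_derivative L2) (at x within {a..b})"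
  shows "L1 = L2"
  using vector_derivative_unique_within_closed_interval[of a b x f L1 L2] assms
  by (simp add: has_real_derivative_iff_has_vector_derivative)

lemma deriv_pos_imp_strict_increasing_Icc:
  fixes f f' :: "real \<Rightarrow> real"
  assumes der: "\<forall>z\<in>{a..b}. (f has_real_derivative f' z) (at z within {a..b})"
    and pos: "\<forall>z\<in>{a..b}. f' z > 0" and "a \<le> x" "x < y" "y \<le> b"
  shows "f x < f y"
proof (rule DERIV_pos_imp_increasing_open[OF \<open>x < y\<close>])
  show "\<exists>l. DERIV f z :> l \<and> l > 0" if "x < z" "z < y" for z
  proof -
    have z: "a < z" "z < b" using that assms(3,5) by auto
    then have "(f has_real_derivative f' z) (at z within {a..b})" using der by auto
    then have "DERIV f z :> f' z" unfolding at_within_Icc_at[OF z] .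
    then show ?thesis using pos z by auto
  qed
  have "continuous_on {a..b} f" using der by (intro DERIV_continuous_on) auto
  then show "continuous_on {x..y} f" by (rule continuous_on_subset) (use assms in auto)
qed

lemma affdist_has_derivative:
  fixes \<phi> \<phi>' :: "real \<Rightarrow> real"
  assumes ab: "a < b" and der: "\<forall>u\<in>{0..1}. (\<phi> has_real_derivative \<phi>' u) (at u within {0..1})"
    and t: "t \<in> {a..b}"
  shows "(affdist \<phi> a b c d has_real_derivative (d - c) / (b - a) * \<phi>' ((t - a) / (b - a)))
    (at t within {a..b})"
proof -
  let ?u = "\<lambda>t. (t - a) / (b - a)"
  have u_der: "(?u has_real_derivative 1 / (b - a)) (at t within {a..b})"
    using ab by (auto intro!: derivative_eq_intros)
  have u_img: "?u ` {a..b} \<subseteq> {0..1}" using ab by (auto simp: field_simps)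
  then have "(\<phi> has_real_derivative \<phi>' (?u t)) (at (?u t) within ?u ` {a..b})"
    using der t by (blast intro: DERIV_subset)
  from DERIV_image_chain[OF this u_der]
  have "(\<phi> \<circ> ?u has_real_derivative \<phi>' (?u t) * (1 / (b - a))) (at t within {a..b})" .
  then have "((\<lambda>t. c + (d - c) * (\<phi> \<circ> ?u) t) has_real_derivative
      0 + (d - c) * (\<phi>' (?u t) * (1 / (b - a)))) (at t within {a..b})"
    by (intro derivative_intros DERIV_cmult)
  then show ?thesis unfolding affdist_def o_def by (simp add: field_simps)
qed

section \<open>Hoelder continuity\<close>

lemma holder_on_nonneg_const:
  assumes "holder_on \<delta> S f"
  obtains C where "C \<ge> 0" "\<forall>x\<in>S. \<forall>y\<in>S. \<bar>f x - f y\<bar> \<le> C * \<bar>x - y\<bar> powr \<delta>"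
proof -
  obtain C where C: "\<forall>x\<in>S. \<forall>y\<in>S. \<bar>f x - f y\<bar> \<le> C * \<bar>x - y\<bar> powr \<delta>"
    using assms unfolding holder_on_def by blast
  have "\<bar>f x - f y\<bar> \<le> max C 0 * \<bar>x - y\<bar> powr \<delta>" if "x \<in> S" "y \<in> S" for x y
  proof -
    have "\<bar>f x - f y\<bar> \<le> C * \<bar>x - y\<bar> powr \<delta>" using C that by blast
    also have "\<dots> \<le> max C 0 * \<bar>x - y\<bar> powr \<delta>" by (intro mult_right_mono) auto
    finally show ?thesis .
  qed
  then show thesis by (intro that[of "max C 0"]) auto
qed

lemma holder_on_cong: "holder_on \<delta> S f \<Longrightarrow> (\<And>x. x \<in> S \<Longrightarrow> f x = g x) \<Longrightarrow> holder_on \<delta> S g"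
  unfolding holder_on_def by simp

lemma holder_on_singleton: "holder_on \<delta> {a} f"
  unfolding holder_on_def by (intro exI[of _ 0]) simp

lemma holder_on_Icc_join:
  assumes "0 \<le> \<delta>" "a \<le> c" "c \<le> b" "holder_on \<delta> {a..c} f" "holder_on \<delta> {c..b} f"
  shows "holder_on \<delta> {a..b} f"
proof -
  obtain C1 where C1: "C1 \<ge> 0" "\<forall>x\<in>{a..c}. \<forall>y\<in>{a..c}. \<bar>f x - f y\<bar> \<le> C1 * \<bar>x - y\<bar> powr \<delta>"
    using holder_on_nonneg_const[OF assms(4)] by blast
  obtain C2 where C2: "C2 \<ge> 0" "\<forall>x\<in>{c..b}. \<forall>y\<in>{c..b}. \<bar>f x - f y\<bar> \<le> C2 * \<bar>x - y\<bar> powr \<delta>"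
    using holder_on_nonneg_const[OF assms(5)] by blast
  have ordered: "\<bar>f x - f y\<bar> \<le> (C1 + C2) * \<bar>x - y\<bar> powr \<delta>"
    if xy: "a \<le> x" "x \<le> y" "y \<le> b" for x y
  proof -
    have p: "C * \<bar>u - v\<bar> powr \<delta> \<le> C * \<bar>x - y\<bar> powr \<delta>"
      if "C \<ge> 0" "x \<le> u" "u \<le> v" "v \<le> y" for C u v
      using that assms(1) by (intro mult_left_mono powr_mono2) auto
    have le_sum: "C1 * q \<le> (C1 + C2) * q" "C2 * q \<le> (C1 + C2) * q" if "q \<ge> 0" for q
      using C1 C2 that by (simp_all add: mult_right_mono)
    consider "y \<le> c" | "c \<le> x" | "x < c" "c < y" by linarith
    then show ?thesis
    proof cases
      case 1
      then have "x \<in> {a..c}" "y \<in> {a..c}" using xy by auto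
      then have "\<bar>f x - f y\<bar> \<le> C1 * \<bar>x - y\<bar> powr \<delta>" using C1 by blast
      then show ?thesis using le_sum(1)[OF powr_ge_zero] by (rule order_trans)
    next
      case 2
      then have "x \<in> {c..b}" "y \<in> {c..b}" using xy by auto
      then have "\<bar>f x - f y\<bar> \<le> C2 * \<bar>x - y\<bar> powr \<delta>" using C2 by blast
      then show ?thesis using le_sum(2)[OF powr_ge_zero] by (rule order_trans)
    next
      case 3
      have "x \<in> {a..c}" "c \<in> {a..c}" "c \<in> {c..b}" "y \<in> {c..b}" using xy 3 by auto
      have "\<bar>f x - f y\<bar> \<le> \<bar>f x - f c\<bar> + \<bar>f c - f y\<bar>" by simp
      also have "\<dots> \<le> C1 * \<bar>x - c\<bar> powr \<delta> + C2 * \<bar>c - y\<bar> powr \<delta>"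
        using C1(2) C2(2) \<open>x \<in> {a..c}\<close> \<open>c \<in> {a..c}\<close> \<open>c \<in> {c..b}\<close> \<open>y \<in> {c..b}\<close>
        by (intro add_mono; blast)
      also have "\<dots> \<le> C1 * \<bar>x - y\<bar> powr \<delta> + C2 * \<bar>x - y\<bar> powr \<delta>"
        using p C1 C2 3 by (intro add_mono) auto
      finally show ?thesis by (simp add: distrib_right)
    qed
  qed
  have "\<bar>f x - f y\<bar> \<le> (C1 + C2) * \<bar>x - y\<bar> powr \<delta>" if "x \<in> {a..b}" "y \<in> {a..b}" for x y
    using ordered[of x y] ordered[of y x] that
    by (cases "x \<le> y") (auto simp: abs_minus_commute)
  then show ?thesis unfolding holder_on_def by blast
qed

lemma holder_on_partition01:
  assumes X: "partition01 n X" and "0 \<le> \<delta>"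
    and pieces: "\<forall>i\<in>{1..n}. holder_on \<delta> {X (i - 1)..X i} h"
  shows "holder_on \<delta> {0..1} h"
proof -
  have "holder_on \<delta> {0..X k} h" if "k \<le> n" for k
    using that
  proof (induction k)
    case 0
    then show ?case using X holder_on_singleton unfolding partition01_def by simp
  next
    case (Suc k)
    have "X k < X (Suc k)" using X Suc.prems unfolding partition01_def by auto
    moreover have "0 \<le> X k" using partition01_le[OF X, of 0 k] X Suc.prems unfolding partition01_def by auto
    moreover have "holder_on \<delta> {X k..X (Suc k)} h" using pieces Suc.prems by force
    ultimately show ?case using holder_on_Icc_join[OF \<open>0 \<le> \<delta>\<close>, of 0 "X k" "X (Suc k)" h] Suc by auto
  qed
  then have "holder_on \<delta> {0..X n} h" by simp
  then show ?thesis using X unfolding partition01_def by simp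
qed

lemma holder_on_affine_rescale:
  assumes f: "holder_on \<delta> {0..1} f" and ab: "a < b"
  shows "holder_on \<delta> {a..b} (\<lambda>t. s * f ((t - a) / (b - a)))"
proof -
  obtain C where C: "\<forall>u\<in>{0..1}. \<forall>v\<in>{0..1}. \<bar>f u - f v\<bar> \<le> C * \<bar>u - v\<bar> powr \<delta>"
    using f unfolding holder_on_def by blast
  have "\<bar>s * f ((x - a) / (b - a)) - s * f ((y - a) / (b - a))\<bar>
      \<le> (\<bar>s\<bar> * C / (b - a) powr \<delta>) * \<bar>x - y\<bar> powr \<delta>"
    if "x \<in> {a..b}" "y \<in> {a..b}" for x y
  proof -
    let ?u = "(x - a) / (b - a)" and ?v = "(y - a) / (b - a)"
    have uv: "?u \<in> {0..1}" "?v \<in> {0..1}" using that ab by (auto simp: field_simps)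
    have "\<bar>s * f ?u - s * f ?v\<bar> = \<bar>s\<bar> * \<bar>f ?u - f ?v\<bar>"
      by (simp add: abs_mult right_diff_distrib[symmetric])
    also have "\<dots> \<le> \<bar>s\<bar> * (C * \<bar>?u - ?v\<bar> powr \<delta>)"
      using C uv by (intro mult_left_mono) auto
    also have "\<bar>?u - ?v\<bar> = \<bar>x - y\<bar> / (b - a)"
      using ab by (simp add: diff_divide_distrib[symmetric])
    also have "\<bar>s\<bar> * (C * (\<bar>x - y\<bar> / (b - a)) powr \<delta>) = (\<bar>s\<bar> * C / (b - a) powr \<delta>) * \<bar>x - y\<bar> powr \<delta>"
      using ab by (simp add: powr_divide)
    finally show ?thesis .
  qed
  then show ?thesis unfolding holder_on_def by blast
qed

text \<open>Derivatives within \<open>{0..1}\<close> are unique there, so the choice only matters off \<open>{0..1}\<close>.\<close>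

definition E_deriv :: "(real \<Rightarrow> real) \<Rightarrow> real \<Rightarrow> real \<Rightarrow> real" where
  "E_deriv \<phi> \<delta> = (SOME \<phi>'. (\<forall>x\<in>{0..1}. (\<phi> has_real_derivative \<phi>' x) (at x within {0..1})) \<and>
     (\<forall>x\<in>{0..1}. \<phi>' x > 0) \<and> holder_on \<delta> {0..1} \<phi>')"

lemma E_derivD:
  assumes "\<phi> \<in> E \<delta>"
  shows "\<forall>x\<in>{0..1}. (\<phi> has_real_derivative E_deriv \<phi> \<delta> x) (at x within {0..1})"
    and "\<forall>x\<in>{0..1}. E_deriv \<phi> \<delta> x > 0"
    and "holder_on \<delta> {0..1} (E_deriv \<phi> \<delta>)"
    and "\<phi> 0 = 0" and "\<phi> 1 = 1"
proof -
  have "\<exists>\<phi>'. (\<forall>x\<in>{0..1}. (\<phi> has_real_derivative \<phi>' x) (at x within {0..1})) \<and>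
     (\<forall>x\<in>{0..1}. \<phi>' x > 0) \<and> holder_on \<delta> {0..1} \<phi>'"
    using assms unfolding E_def holder_on_def by blast
  from someI_ex[OF this, folded E_deriv_def]
  show "\<forall>x\<in>{0..1}. (\<phi> has_real_derivative E_deriv \<phi> \<delta> x) (at x within {0..1})"
    and "\<forall>x\<in>{0..1}. E_deriv \<phi> \<delta> x > 0" and "holder_on \<delta> {0..1} (E_deriv \<phi> \<delta>)"
    by auto
  show "\<phi> 0 = 0" "\<phi> 1 = 1" using assms unfolding E_def by auto
qed

lemma E_intro:
  assumes "\<psi> 0 = 0" "\<psi> 1 = 1"
    and der: "\<forall>x\<in>{0..1}. (\<psi> has_real_derivative \<psi>' x) (at x within {0..1})"
    and pos: "\<forall>x\<in>{0..1}. \<psi>' x > 0" and "holder_on \<delta> {0..1} \<psi>'"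
  shows "\<psi> \<in> E \<delta>"
proof -
  have mono: "strict_mono_on {0..1} \<psi>"
    using deriv_pos_imp_strict_increasing_Icc[OF der pos] by (auto intro: strict_mono_onI)
  have "\<psi> ` {0..1} \<subseteq> {0..1}"
  proof
    fix y assume "y \<in> \<psi> ` {0..1}"
    then obtain x where x: "x \<in> {0..1}" "y = \<psi> x" by blast
    then have "\<psi> 0 \<le> \<psi> x" "\<psi> x \<le> \<psi> 1" using strict_mono_on_leD[OF mono] by auto
    then show "y \<in> {0..1}" using x assms(1,2) by simp
  qed
  moreover have "{0..1} \<subseteq> \<psi> ` {0..1}"
  proof
    fix y :: real assume "y \<in> {0..1}"
    moreover have "continuous_on {0..1} \<psi>" using der by (intro DERIV_continuous_on) auto
    ultimately obtain x where "0 \<le> x" "x \<le> 1" "\<psi> x = y"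
      using IVT'[of \<psi> 0 y 1] assms(1,2) by auto
    then show "y \<in> \<psi> ` {0..1}" by force
  qed
  ultimately have "bij_betw \<psi> {0..1} {0..1}"
    using strict_mono_on_imp_inj_on[OF mono] unfolding bij_betw_def by blast
  then show ?thesis using assms unfolding E_def holder_on_def by blast
qed

section \<open>Gluing affine distortions\<close>

definition piecewise_affdist ::
    "(real \<Rightarrow> real) \<Rightarrow> (nat \<Rightarrow> real \<Rightarrow> real) \<Rightarrow> nat \<Rightarrow> (nat \<Rightarrow> real) \<Rightarrow> (nat \<Rightarrow> real) \<Rightarrow> bool" where
  "piecewise_affdist \<psi> \<phi> n X Y \<longleftrightarrow>
     (\<forall>i\<in>{1..n}. \<forall>t\<in>{X (i - 1)..X i}. \<psi> t = affdist (\<phi> i) (X (i - 1)) (X i) (Y (i - 1)) (Y i) t)"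

definition slopes_match ::
    "real \<Rightarrow> (nat \<Rightarrow> real \<Rightarrow> real) \<Rightarrow> nat \<Rightarrow> (nat \<Rightarrow> real) \<Rightarrow> (nat \<Rightarrow> real) \<Rightarrow> bool" where
  "slopes_match \<delta> \<phi> n X Y \<longleftrightarrow> (\<forall>k\<in>{1..<n}.
     (Y k - Y (k - 1)) / (X k - X (k - 1)) * E_deriv (\<phi> k) \<delta> 1 =
     (Y (Suc k) - Y k) / (X (Suc k) - X k) * E_deriv (\<phi> (Suc k)) \<delta> 0)"

lemma piecewise_affdist_cong:
  assumes "\<forall>k\<le>n. X k = X' k"
  shows "piecewise_affdist \<psi> \<phi> n X Y \<longleftrightarrow> piecewise_affdist \<psi> \<phi> n X' Y"
proof -
  have "X (i - 1) = X' (i - 1)" "X i = X' i" if "i \<in> {1..n}" for i using assms that by auto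
  then show ?thesis unfolding piecewise_affdist_def by auto
qed

lemma piecewise_affdist_endpoints:
  assumes X: "partition01 n X" and Y: "partition01 n Y" and \<phi>E: "\<forall>i\<in>{1..n}. \<phi> i \<in> E \<delta>"
    and \<psi>: "piecewise_affdist \<psi> \<phi> n X Y"
  shows "\<psi> 0 = 0" "\<psi> 1 = 1"
proof -
  have n: "1 \<in> {1..n}" "n \<in> {1..n}" using partition01_ge1[OF X] by auto
  have ends: "X 0 = 0" "X n = 1" "Y 0 = 0" "Y n = 1" using X Y unfolding partition01_def by auto
  have "X 0 < X 1" "X (n - 1) < X n" using partition01_piece_less[OF X n(1)] partition01_piece_less[OF X n(2)] by simp_all
  moreover have "0 \<in> {X (1 - 1)..X 1}" "1 \<in> {X (n - 1)..X n}" using ends calculation by auto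
  then have "\<psi> 0 = affdist (\<phi> 1) (X (1 - 1)) (X 1) (Y (1 - 1)) (Y 1) 0"
    "\<psi> 1 = affdist (\<phi> n) (X (n - 1)) (X n) (Y (n - 1)) (Y n) 1"
    using \<psi> n unfolding piecewise_affdist_def by blast+
  ultimately show "\<psi> 0 = 0" "\<psi> 1 = 1"
    using ends E_derivD(4)[OF \<phi>E[rule_format, OF n(1)]] E_derivD(5)[OF \<phi>E[rule_format, OF n(2)]]
    unfolding affdist_def by simp_all
qed

lemma piecewise_affdist_in_E:
  assumes X: "partition01 n X" and Y: "partition01 n Y" and "0 \<le> \<delta>"
    and \<phi>E: "\<forall>i\<in>{1..n}. \<phi> i \<in> E \<delta>" and match: "slopes_match \<delta> \<phi> n X Y"
  shows "\<exists>\<psi>\<in>E \<delta>. piecewise_affdist \<psi> \<phi> n X Y"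
proof -
  define g where "g i = affdist (\<phi> i) (X (i - 1)) (X i) (Y (i - 1)) (Y i)" for i
  define g' where "g' i t = (Y i - Y (i - 1)) / (X i - X (i - 1)) *
    E_deriv (\<phi> i) \<delta> ((t - X (i - 1)) / (X i - X (i - 1)))" for i t
  note \<phi>D = E_derivD[OF \<phi>E[rule_format]]
  note Xlt = partition01_piece_less[OF X] and Ylt = partition01_piece_less[OF Y]
  have nodes: "g k (X k) = g (Suc k) (X k)" "g' k (X k) = g' (Suc k) (X k)"
    if k: "k \<in> {1..<n}" for k
  proof -
    have k1: "k \<in> {1..n}" "Suc k \<in> {1..n}" using k by auto
    have "X (k - 1) < X k" "X k < X (Suc k)" using Xlt[OF k1(1)] Xlt[OF k1(2)] by simp_all
    then show "g k (X k) = g (Suc k) (X k)" "g' k (X k) = g' (Suc k) (X k)"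
      using \<phi>D(5)[OF k1(1)] \<phi>D(4)[OF k1(2)] match k
      unfolding g_def g'_def affdist_def slopes_match_def by simp_all
  qed
  have \<psi>: "glue X g t = g i t" if "i \<in> {1..n}" "t \<in> {X (i - 1)..X i}" for i t
    using glue_eq[OF X _ that] nodes(1) by blast
  have \<psi>': "glue X g' t = g' i t" if "i \<in> {1..n}" "t \<in> {X (i - 1)..X i}" for i t
    using glue_eq[OF X _ that] nodes(2) by blast
  have der: "(glue X g has_real_derivative glue X g' x) (at x within {0..1})" for x
  proof (rule has_field_derivative_within_partition01[OF X])
    fix i assume i: "i \<in> {1..n}" and x: "x \<in> {X (i - 1)..X i}"
    have "(g i has_real_derivative g' i x) (at x within {X (i - 1)..X i})"
      unfolding g_def g'_def using affdist_has_derivative[OF Xlt[OF i] \<phi>D(1)[OF i] x] .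
    then have "(glue X g has_real_derivative g' i x) (at x within {X (i - 1)..X i})"
      by (rule has_field_derivative_transform_within[where d=1]) (use x \<psi> i in auto)
    then show "(glue X g has_real_derivative glue X g' x) (at x within {X (i - 1)..X i})"
      using \<psi>' i x by simp
  qed
  have pos: "glue X g' x > 0" if x01: "x \<in> {0..1}" for x
  proof -
    obtain i where i: "i \<in> {1..n}" and x: "x \<in> {X (i - 1)..X i}"
      using piece_bounds[OF X x01] by blast
    have "(x - X (i - 1)) / (X i - X (i - 1)) \<in> {0..1}" using x Xlt[OF i] by (auto simp: field_simps)
    then show ?thesis using \<psi>'[OF i x] \<phi>D(2)[OF i] Xlt[OF i] Ylt[OF i] unfolding g'_def by simp
  qed
  have "holder_on \<delta> {0..1} (glue X g')"
  proof (rule holder_on_partition01[OF X \<open>0 \<le> \<delta>\<close>], intro ballI)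
    fix i assume i: "i \<in> {1..n}"
    have "holder_on \<delta> {X (i - 1)..X i} (g' i)"
      unfolding g'_def by (rule holder_on_affine_rescale[OF \<phi>D(3)[OF i] Xlt[OF i]])
    then show "holder_on \<delta> {X (i - 1)..X i} (glue X g')" by (rule holder_on_cong) (use \<psi>' i in auto)
  qed
  moreover have glued: "piecewise_affdist (glue X g) \<phi> n X Y"
    unfolding piecewise_affdist_def by (auto simp: \<psi> g_def)
  ultimately have "glue X g \<in> E \<delta>"
    using piecewise_affdist_endpoints[OF X Y \<phi>E] der pos by (intro E_intro) auto
  with glued show ?thesis by blast
qed

lemma slopes_match_if_piecewise_affdist:
  assumes X: "partition01 n X" and \<phi>E: "\<forall>i\<in>{1..n}. \<phi> i \<in> E \<delta>"
    and \<psi>E: "\<psi> \<in> E \<delta>" and \<psi>: "piecewise_affdist \<psi> \<phi> n X Y"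
  shows "slopes_match \<delta> \<phi> n X Y"
proof -
  obtain \<psi>' where d\<psi>: "\<forall>x\<in>{0..1}. (\<psi> has_real_derivative \<psi>' x) (at x within {0..1})"
    using \<psi>E unfolding E_def by blast
  note Xlt = partition01_piece_less[OF X]
  have node: "\<psi>' t = (Y i - Y (i - 1)) / (X i - X (i - 1)) * E_deriv (\<phi> i) \<delta> ((t - X (i - 1)) / (X i - X (i - 1)))"
    if i: "i \<in> {1..n}" and t: "t \<in> {X (i - 1)..X i}" for i t
  proof -
    have "(\<psi> has_real_derivative \<psi>' t) (at t within {X (i - 1)..X i})"
      using d\<psi> partition01_piece_subset[OF X i] t by (blast intro: DERIV_subset)
    moreover have "(\<psi> has_real_derivative (Y i - Y (i - 1)) / (X i - X (i - 1)) *
        E_deriv (\<phi> i) \<delta> ((t - X (i - 1)) / (X i - X (i - 1)))) (at t within {X (i - 1)..X i})"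
      using affdist_has_derivative[OF Xlt[OF i] E_derivD(1)[OF \<phi>E[rule_format, OF i]] t]
      by (rule has_field_derivative_transform_within[where d=1]) (use t \<psi> i in \<open>auto simp: piecewise_affdist_def\<close>)
    ultimately show ?thesis using has_field_derivative_unique_Icc[OF Xlt[OF i] t] by blast
  qed
  show ?thesis unfolding slopes_match_def
  proof
    fix k assume k: "k \<in> {1..<n}"
    then have k1: "k \<in> {1..n}" "Suc k \<in> {1..n}" by auto
    show "(Y k - Y (k - 1)) / (X k - X (k - 1)) * E_deriv (\<phi> k) \<delta> 1 =
        (Y (Suc k) - Y k) / (X (Suc k) - X k) * E_deriv (\<phi> (Suc k)) \<delta> 0"
      using node[OF k1(1), of "X k"] node[OF k1(2), of "X k"] Xlt[OF k1(1)] Xlt[OF k1(2)] by simp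
  qed
qed

section \<open>Lengths of the pieces\<close>

definition node_ratio :: "real \<Rightarrow> (nat \<Rightarrow> real \<Rightarrow> real) \<Rightarrow> (nat \<Rightarrow> real) \<Rightarrow> nat \<Rightarrow> real" where
  "node_ratio \<delta> \<phi> Y k = (Y (Suc k) - Y k) * E_deriv (\<phi> (Suc k)) \<delta> 0 / ((Y k - Y (k - 1)) * E_deriv (\<phi> k) \<delta> 1)"

lemma node_ratio_pos:
  assumes "partition01 n Y" "\<forall>i\<in>{1..n}. \<phi> i \<in> E \<delta>" "k \<in> {1..<n}"
  shows "node_ratio \<delta> \<phi> Y k > 0"
  using partition01_piece_less[OF assms(1), of k] partition01_piece_less[OF assms(1), of "Suc k"]
    E_derivD(2)[of "\<phi> k" \<delta>] E_derivD(2)[of "\<phi> (Suc k)" \<delta>] assms(2,3)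
  unfolding node_ratio_def by (auto intro!: divide_pos_pos mult_pos_pos)

lemma slopes_match_iff_increments:
  assumes X: "partition01 n X" and Y: "partition01 n Y" and \<phi>E: "\<forall>i\<in>{1..n}. \<phi> i \<in> E \<delta>"
  shows "slopes_match \<delta> \<phi> n X Y \<longleftrightarrow>
    (\<forall>k\<in>{1..<n}. X (Suc k) - X k = (X k - X (k - 1)) * node_ratio \<delta> \<phi> Y k)"
proof -
  have "(Y k - Y (k - 1)) / (X k - X (k - 1)) * E_deriv (\<phi> k) \<delta> 1 =
      (Y (Suc k) - Y k) / (X (Suc k) - X k) * E_deriv (\<phi> (Suc k)) \<delta> 0 \<longleftrightarrow>
    X (Suc k) - X k = (X k - X (k - 1)) * node_ratio \<delta> \<phi> Y k" if k: "k \<in> {1..<n}" for k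
  proof -
    have k1: "k \<in> {1..n}" "Suc k \<in> {1..n}" using k by auto
    have "X k - X (k - 1) > 0" "X (Suc k) - X k > 0" "Y k - Y (k - 1) > 0" "E_deriv (\<phi> k) \<delta> 1 > 0"
      using partition01_piece_less[OF X k1(1)] partition01_piece_less[OF X k1(2)]
        partition01_piece_less[OF Y k1(1)] E_derivD(2)[OF \<phi>E[rule_format, OF k1(1)]] by auto
    then show ?thesis unfolding node_ratio_def by (auto simp: field_simps)
  qed
  then show ?thesis unfolding slopes_match_def by auto
qed

lemma increments_closed_form:
  fixes A R :: "nat \<Rightarrow> real"
  assumes "\<forall>k\<in>{1..<n}. A (Suc k) = A k * R k" "k \<in> {1..n}"
  shows "A k = A 1 * (\<Prod>j\<in>{1..<k}. R j)"
  using assms(2)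
proof (induction k)
  case (Suc k)
  then show ?case using assms(1) by (cases "k = 0") (auto simp: prod.atLeastLessThan_Suc)
qed simp

lemma partition01_increments_unique:
  assumes X: "partition01 n X" and X': "partition01 n X'"
    and rX: "\<forall>k\<in>{1..<n}. X (Suc k) - X k = (X k - X (k - 1)) * R k"
    and rX': "\<forall>k\<in>{1..<n}. X' (Suc k) - X' k = (X' k - X' (k - 1)) * R k"
  shows "\<forall>k\<le>n. X k = X' k"
proof -
  define P where "P k = (\<Prod>j\<in>{1..<k}. R j)" for k
  have A: "X k - X (k - 1) = (X 1 - X 0) * P k" "X' k - X' (k - 1) = (X' 1 - X' 0) * P k"
    if "k \<in> {1..n}" for k
    using increments_closed_form[of n "\<lambda>k. X k - X (k - 1)" R k]
      increments_closed_form[of n "\<lambda>k. X' k - X' (k - 1)" R k] rX rX' that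
    unfolding P_def by simp_all
  have "(X 1 - X 0) * (\<Sum>k\<in>{1..n}. P k) = (\<Sum>k\<in>{1..n}. X k - X (k - 1))"
    "(X' 1 - X' 0) * (\<Sum>k\<in>{1..n}. P k) = (\<Sum>k\<in>{1..n}. X' k - X' (k - 1))"
    unfolding sum_distrib_left
    by (rule sum.cong[OF refl], rule A(1)[symmetric], simp)
      (rule sum.cong[OF refl], rule A(2)[symmetric], simp)
  then have "(X 1 - X 0) * (\<Sum>k\<in>{1..n}. P k) = 1" "(X' 1 - X' 0) * (\<Sum>k\<in>{1..n}. P k) = 1"
    using sum_increments[of X n] sum_increments[of X' n] X X' unfolding partition01_def by simp_all
  then have "X 1 - X 0 = X' 1 - X' 0" by (metis mult_cancel_right mult_zero_left zero_neq_one)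
  then have "X k - X (k - 1) = X' k - X' (k - 1)" if "k \<in> {1..n}" for k using A that by simp
  then have "(\<Sum>i\<in>{1..k}. X i - X (i - 1)) = (\<Sum>i\<in>{1..k}. X' i - X' (i - 1))" if "k \<le> n" for k
    using that by (intro sum.cong) auto
  then show ?thesis using sum_increments[of X] sum_increments[of X'] X X'
    unfolding partition01_def by simp
qed

lemma partition01_increments_exist:
  fixes R :: "nat \<Rightarrow> real"
  assumes "n \<ge> 1" and R: "\<forall>k\<in>{1..<n}. R k > 0"
  shows "\<exists>X. partition01 n X \<and> (\<forall>k\<in>{1..<n}. X (Suc k) - X k = (X k - X (k - 1)) * R k)"
proof -
  define w where "w k = (\<Prod>j\<in>{1..<k}. R j)" for k
  define W where "W = (\<Sum>i\<in>{1..n}. w i)"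
  define X where "X k = (\<Sum>i\<in>{1..k}. w i) / W" for k
  have w_pos: "w k > 0" if "k \<le> n" for k unfolding w_def using R that by (intro prod_pos) auto
  have "W > 0" unfolding W_def using w_pos \<open>n \<ge> 1\<close> by (intro sum_pos) auto
  have incr: "X k - X (k - 1) = w k / W" if "k \<ge> 1" for k
    using that unfolding X_def by (cases k) (auto simp: diff_divide_distrib[symmetric])
  have "X i < X (Suc i)" if "i < n" for i
    using incr[of "Suc i"] divide_pos_pos[OF w_pos[of "Suc i"] \<open>W > 0\<close>] that by simp
  moreover have "X 0 = 0" "X n = 1" using \<open>W > 0\<close> by (simp_all add: X_def W_def)
  ultimately have "partition01 n X" unfolding partition01_def by blast
  moreover have "X (Suc k) - X k = (X k - X (k - 1)) * R k" if "k \<in> {1..<n}" for k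
    using incr[of k] incr[of "Suc k"] that unfolding w_def by (simp add: prod.atLeastLessThan_Suc)
  ultimately show ?thesis by blast
qed

lemma pad_nth_partition01:
  assumes "xs \<in> D n" "n \<ge> 1"
  shows "partition01 n ((!) (pad xs))"
proof -
  have len: "length xs = n - 1" and so: "sorted_wrt (<) xs" and bd: "\<forall>x\<in>set xs. 0 < x \<and> x < 1"
    using assms unfolding D_def by auto
  have "pad xs ! i < pad xs ! Suc i" if i: "i < n" for i
  proof -
    consider "i = 0" "n = 1" | "i = 0" "n > 1" | "i > 0" "Suc i = n" | "i > 0" "Suc i < n"
      using i by linarith
    then show ?thesis
    proof cases
      case 1 then show ?thesis unfolding pad_def using len by simp
    next
      case 2 then show ?thesis unfolding pad_def using bd len by (simp add: nth_append)
    next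
      case 3
      then have "xs ! (i - 1) \<in> set xs" using len by auto
      then show ?thesis unfolding pad_def using 3 bd len by (simp add: nth_append nth_Cons')
    next
      case 4
      then have "xs ! (i - 1) < xs ! i" using so len by (simp add: sorted_wrt_iff_nth_less)
      moreover have "i - 1 < n - 1" "i < n - 1" using 4 by auto
      ultimately show ?thesis unfolding pad_def using 4 len by (simp add: nth_append nth_Cons')
    qed
  qed
  then show ?thesis unfolding partition01_def pad_def using len assms(2) by (simp add: nth_append)
qed

lemma pad_map_nth:
  assumes "partition01 n X" "k \<le> n"
  shows "pad (map X [1..<n]) ! k = X k"
  using assms unfolding pad_def partition01_def
  by (cases "k = 0"; cases "k = n") (auto simp: nth_append nth_Cons')

lemma map_partition01_in_D:
  assumes X: "partition01 n X"
  shows "map X [1..<n] \<in> D n"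
  using partition01_less[OF X, of 0] partition01_less[OF X, of _ n] X
  unfolding D_def partition01_def sorted_wrt_iff_nth_less
  by (auto intro!: partition01_less[OF X])

lemma D_eq_map_pad_nth:
  assumes "xs \<in> D n"
  shows "xs = map ((!) (pad xs)) [1..<n]"
  using assms unfolding D_def pad_def by (intro nth_equalityI) (auto simp: nth_append)

theorem mainTheorem20:
  fixes \<delta> :: real and n :: nat and ys :: "real list" and \<phi> :: "nat \<Rightarrow> real \<Rightarrow> real"
  assumes "0 < \<delta>" and "\<delta> < 1/2" and "n \<ge> 1"
    and "ys \<in> D n"
    and "\<forall>i\<in>{1..n}. \<phi> i \<in> E \<delta>"
  shows "\<exists>!xs. xs \<in> D n \<and>
           (\<exists>\<psi>\<in>E \<delta>. \<forall>i\<in>{1..n}. \<forall>t\<in>{pad xs ! (i - 1) .. pad xs ! i}.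
              \<psi> t = affdist (\<phi> i) (pad xs ! (i - 1)) (pad xs ! i) (pad ys ! (i - 1)) (pad ys ! i) t)"
proof -
  let ?Y = "(!) (pad ys)" and ?R = "node_ratio \<delta> \<phi> ((!) (pad ys))"
  have Y: "partition01 n ?Y" using pad_nth_partition01[OF assms(4,3)] .
  have glued_iff: "(\<exists>\<psi>\<in>E \<delta>. piecewise_affdist \<psi> \<phi> n X ?Y) \<longleftrightarrow>
      (\<forall>k\<in>{1..<n}. X (Suc k) - X k = (X k - X (k - 1)) * ?R k)" if X: "partition01 n X" for X
    using piecewise_affdist_in_E[OF X Y _ assms(5)] slopes_match_if_piecewise_affdist[OF X assms(5)]
      slopes_match_iff_increments[OF X Y assms(5)] assms(1) by auto
  obtain X where X: "partition01 n X" and rX: "\<forall>k\<in>{1..<n}. X (Suc k) - X k = (X k - X (k - 1)) * ?R k"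
    using partition01_increments_exist[OF assms(3)] node_ratio_pos[OF Y assms(5)] by blast
  show ?thesis
    unfolding piecewise_affdist_def[symmetric]
  proof (rule ex1I[of _ "map X [1..<n]"])
    have "\<forall>k\<le>n. X k = pad (map X [1..<n]) ! k" using pad_map_nth[OF X] by simp
    then show "map X [1..<n] \<in> D n \<and> (\<exists>\<psi>\<in>E \<delta>. piecewise_affdist \<psi> \<phi> n ((!) (pad (map X [1..<n]))) ?Y)"
      using map_partition01_in_D[OF X] glued_iff[OF X] rX piecewise_affdist_cong by blast
  next
    fix xs assume xs: "xs \<in> D n \<and> (\<exists>\<psi>\<in>E \<delta>. piecewise_affdist \<psi> \<phi> n ((!) (pad xs)) ?Y)"
    then have X': "partition01 n ((!) (pad xs))" using pad_nth_partition01 assms(3) by blast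
    then have "\<forall>k\<le>n. X k = pad xs ! k"
      using partition01_increments_unique[OF X X' rX] glued_iff xs by blast
    then have "map ((!) (pad xs)) [1..<n] = map X [1..<n]" by (intro map_cong) auto
    then show "xs = map X [1..<n]" using D_eq_map_pad_nth[of xs n] xs by metis
  qed
qed

end
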